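(* Let $S$ be a pool of size $m$ in $[0,1]$, and assume that $\mathrm{err}(S,\mathcal{H}_{\dashv}) \leq k/m$. Then the following procedure finds $\hat{h}$ such that $\mathrm{err}(S,\hat{h}) = \mathrm{err}(S,\mathcal{H}_{\dashv})$ with an auditing complexity of $k+1$: query the labels of the points of $S$ in order from highest to lowest value, stopping once $k+1$ negative labels have been observed, and return a threshold hypothesis in $\mathcal{H}_{\dashv}$ that minimizes the error on the labeled (queried) points.
   Context: The domain is $\mathcal{X}=[0,1]$ with labels in $\{-1,+1\}$. $\mathcal{H}_{\dashv} = \{h_a \mid a \in [0,1]\}$ is the class of thresholds on the line, where the hypothesis with threshold $a$ labels $x$ positive if $x \geq a$ and negative otherwise. For a multiset $S$ of labeled points, $\mathrm{err}(S,h)$ is the fraction of points in $S$ misclassified by $h$, and $\mathrm{err}(S,\mathcal{H}) = \min_{h\in\mathcal{H}}\mathrm{err}(S,h)$. The pool $S$ is given with hidden labels that are revealed only upon querying. The auditing complexity of a procedure is the number of queries it makes on points whose labels are negative (queries returning positive labels are free). *)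

theory Defs
  imports Main "HOL-Library.Multiset" Complex_Main
begin

text \<open>Labeled points: pairs (x, y) with x a real in [0,1] and y in {-1, +1} (as an int).
  A pool is a list (representing a multiset) of labeled points.\<close>

type_synonym lpoint = "real \<times> int"

definition thr :: "real \<Rightarrow> real \<Rightarrow> int" where
  "thr a x = (if x \<ge> a then 1 else -1)"

definition err :: "lpoint list \<Rightarrow> real \<Rightarrow> real" where
  "err S a = real (length (filter (\<lambda>(x, y). thr a x \<noteq> y) S)) / real (length S)"

definition err_H :: "lpoint list \<Rightarrow> real" where
  "err_H S = (INF a \<in> {0..1}. err S a)"

text \<open>Points queried when scanning the list in order and stopping right after
  the (n+1)-th negative label has been observed (or when the list is exhausted).\<close>
fun query_prefix :: "nat \<Rightarrow> lpoint list \<Rightarrow> lpoint list" where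
  "query_prefix n [] = []"
| "query_prefix n (p # ps) =
     (if snd p = -1 then (if n = 0 then [p] else p # query_prefix (n - 1) ps)
      else p # query_prefix n ps)"

definition audit_cost :: "lpoint list \<Rightarrow> nat" where
  "audit_cost Q = length (filter (\<lambda>p. snd p = -1) Q)"

end

theory Submission
  imports Defs
begin

text \<open>Let \<open>Q\<close> be the queried prefix of the descending pool and \<open>R\<close> the rest. Either \<open>R\<close> is
  empty, or \<open>Q\<close> contains \<open>k + 1\<close> negatives and lies entirely above \<open>R\<close>. A threshold at or
  below every queried negative then makes at least \<open>k + 1\<close> mistakes, more than the optimum on
  \<open>S\<close>; any other threshold lies above all of \<open>R\<close> and so makes the same number of mistakes on
  \<open>R\<close>, namely the number of positives there. Hence among thresholds with at most \<open>k\<close> mistakes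
  the error on \<open>S\<close> is the error on \<open>Q\<close> plus a constant, and minimizing on \<open>Q\<close> minimizes on \<open>S\<close>.\<close>

definition mistakes :: "lpoint list \<Rightarrow> real \<Rightarrow> nat" where
  "mistakes L a = length (filter (\<lambda>(x, y). thr a x \<noteq> y) L)"

lemma err_eq_mistakes: "err L a = real (mistakes L a) / real (length L)"
  by (simp add: err_def mistakes_def)

lemma mistakes_append: "mistakes (A @ B) a = mistakes A a + mistakes B a"
  by (simp add: mistakes_def)

lemma mistakes_mset_eq: "mset A = mset B \<Longrightarrow> mistakes A a = mistakes B a"
  unfolding mistakes_def by (metis mset_filter size_mset)

lemma ex_min_mistakes: "\<exists>a0\<in>{0..1}. \<forall>a\<in>{0..1}. mistakes L a0 \<le> mistakes L a"
  using ex_has_least_nat[of "\<lambda>a. a \<in> {0..1::real}" 0 "mistakes L"] by fastforce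

lemma err_H_eq_err_if_min_mistakes:
  assumes "a0 \<in> {0..1}" and min: "\<forall>a\<in>{0..1}. mistakes L a0 \<le> mistakes L a"
  shows "err_H L = err L a0"
proof -
  have le: "err L a0 \<le> err L a" if "a \<in> {0..1}" for a
    using min that by (simp add: err_eq_mistakes divide_right_mono)
  then have "bdd_below (err L ` {0..1})"
    by (intro bdd_belowI[where m = "err L a0"]) auto
  then have "err_H L \<le> err L a0"
    unfolding err_H_def using assms(1) by (rule cINF_lower)
  moreover have "err L a0 \<le> err_H L"
    unfolding err_H_def by (rule cINF_greatest) (use le in auto)
  ultimately show ?thesis by simp
qed

lemma err_eq_err_H_iff_min_mistakes:
  assumes "L \<noteq> []" and "a \<in> {0..1}"
  shows "err L a = err_H L \<longleftrightarrow> (\<forall>a'\<in>{0..1}. mistakes L a \<le> mistakes L a')"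
proof -
  obtain a0 where a0: "a0 \<in> {0..1}" "\<forall>a\<in>{0..1}. mistakes L a0 \<le> mistakes L a"
    using ex_min_mistakes by blast
  then have "err_H L = err L a0"
    by (rule err_H_eq_err_if_min_mistakes)
  with \<open>L \<noteq> []\<close> have "err L a = err_H L \<longleftrightarrow> mistakes L a = mistakes L a0"
    by (simp add: err_eq_mistakes)
  with a0 \<open>a \<in> {0..1}\<close> show ?thesis
    by (metis le_antisym)
qed

lemma audit_cost_query_prefix_le: "audit_cost (query_prefix n L) \<le> n + 1"
  by (induction n L rule: query_prefix.induct) (auto simp: audit_cost_def)

lemma query_prefix_append_rest:
  "\<exists>R. L = query_prefix n L @ R \<and> (R \<noteq> [] \<longrightarrow> audit_cost (query_prefix n L) = n + 1)"
  by (induction n L rule: query_prefix.induct) (auto simp: audit_cost_def)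

lemma audit_cost_le_mistakes:
  assumes "\<forall>p\<in>set Q. snd p = -1 \<longrightarrow> a \<le> fst p"
  shows "audit_cost Q \<le> mistakes Q a"
  using assms unfolding audit_cost_def mistakes_def
  by (induction Q) (auto simp: thr_def)

lemma mistakes_below_threshold:
  assumes "\<forall>q\<in>set R. fst q < a"
  shows "mistakes R a = length (filter (\<lambda>q. snd q \<noteq> -1) R)"
  unfolding mistakes_def
  by (rule arg_cong[where f = length], rule filter_cong) (use assms in \<open>auto simp: thr_def\<close>)

lemma mistakes_query_dichotomy:
  assumes desc: "sorted_wrt (\<lambda>p q. fst p \<ge> fst q) (Q @ R)"
    and stop: "R \<noteq> [] \<longrightarrow> audit_cost Q = n + 1"
  shows "n < mistakes Q a \<or> mistakes R a = length (filter (\<lambda>q. snd q \<noteq> -1) R)"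
proof (cases "R = [] \<or> (\<forall>p\<in>set Q. snd p = -1 \<longrightarrow> a \<le> fst p)")
  case True
  with stop show ?thesis
    using audit_cost_le_mistakes[of Q a] by (auto simp: mistakes_def)
next
  case False
  then obtain p where "p \<in> set Q" "fst p < a" by force
  with desc have "\<forall>q\<in>set R. fst q < a"
    by (fastforce simp: sorted_wrt_append)
  then show ?thesis by (simp add: mistakes_below_threshold)
qed

lemma min_of_sum_if_const_below:
  fixes f g :: "'a \<Rightarrow> nat"
  assumes dich: "\<forall>x\<in>A. K < f x \<or> g x = c"
    and x0: "x0 \<in> A" "\<forall>x\<in>A. f x0 + g x0 \<le> f x + g x" "f x0 + g x0 \<le> K"
    and x: "x \<in> A" "\<forall>x'\<in>A. f x \<le> f x'"
  shows "\<forall>x'\<in>A. f x + g x \<le> f x' + g x'"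
proof
  fix x' assume "x' \<in> A"
  have "g x0 = c" using dich x0 by fastforce
  moreover have "g x = c" using dich x x0 \<open>g x0 = c\<close> by fastforce
  ultimately show "f x + g x \<le> f x' + g x'"
    using dich \<open>x' \<in> A\<close> x x0 by fastforce
qed

theorem lemma3:
  fixes S :: "lpoint list" and k :: nat and order :: "lpoint list"
  assumes pts: "\<forall>p \<in> set S. 0 \<le> fst p \<and> fst p \<le> 1 \<and> snd p \<in> {-1, 1}"
    and m_def: "m = length S"
    and hyp: "err_H S \<le> real k / real m"
    and perm: "mset order = mset S"
    and desc: "sorted_wrt (\<lambda>p q. fst p \<ge> fst q) order"
    and Q_def: "Q = query_prefix k order"
  shows "(\<exists>a \<in> {0..1}. err Q a = err_H Q)
       \<and> (\<forall>a \<in> {0..1}. err Q a = err_H Q \<longrightarrow> err S a = err_H S)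
       \<and> audit_cost Q \<le> k + 1"
proof -
  obtain R where R: "order = Q @ R" "R \<noteq> [] \<longrightarrow> audit_cost Q = k + 1"
    using query_prefix_append_rest Q_def by blast
  have mistakes_S: "mistakes S a = mistakes Q a + mistakes R a" for a
    using mistakes_mset_eq[OF perm] R(1) mistakes_append by metis
  have dich: "\<forall>a\<in>{0..1}. k < mistakes Q a \<or> mistakes R a = length (filter (\<lambda>q. snd q \<noteq> -1) R)"
    using mistakes_query_dichotomy desc R by metis
  have "err S a = err_H S" if "a \<in> {0..1}" "err Q a = err_H Q" for a
  proof (cases "S = []")
    case True
    then show ?thesis by (simp add: err_def err_H_def)
  next
    case False
    then have "Q \<noteq> []"
      using perm Q_def by (cases order) auto
    obtain a0 where a0: "a0 \<in> {0..1}" "\<forall>a\<in>{0..1}. mistakes S a0 \<le> mistakes S a"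
      using ex_min_mistakes by blast
    with hyp False m_def have "mistakes S a0 \<le> k"
      by (simp add: err_H_eq_err_if_min_mistakes err_eq_mistakes divide_le_cancel)
    moreover have "\<forall>a'\<in>{0..1}. mistakes Q a \<le> mistakes Q a'"
      using err_eq_err_H_iff_min_mistakes[OF \<open>Q \<noteq> []\<close>] that by blast
    ultimately have "\<forall>a'\<in>{0..1}. mistakes S a \<le> mistakes S a'"
      using min_of_sum_if_const_below[OF dich] a0 that(1) unfolding mistakes_S by blast
    with False \<open>a \<in> {0..1}\<close> show ?thesis
      by (simp add: err_eq_err_H_iff_min_mistakes)
  qed
  moreover have "\<exists>a \<in> {0..1}. err Q a = err_H Q"
    using ex_min_mistakes err_H_eq_err_if_min_mistakes by metis
  ultimately show ?thesis
    using audit_cost_query_prefix_le Q_def by blast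
qed

end
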